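(* Let $\phi$ be a flow of a compact metric space $X$. If $\phi$ is expansive on $X\setminus Sing(\phi)$, then $Sing(\phi)$ is dynamically isolated.
   Context: A flow is a continuous $\phi:\mathbb{R}\times X\to X$ with $\phi_0=\mathrm{id}$, $\phi_{t+s}=\phi_t\circ\phi_s$; $\phi_I(x)=\{\phi_t(x):t\in I\}$; $Sing(\phi)$ is the set of fixed points. $\phi$ is expansive on $\Lambda\subset X$ if for every $\epsilon>0$ there is $\delta>0$ such that whenever $x,y\in\Lambda$ and a continuous $s:\mathbb{R}\to\mathbb{R}$ with $s(0)=0$ satisfy $d(\phi_t(x),\phi_{s(t)}(y))\le\delta$ for all $t$, then $y\in\phi_{[-\epsilon,\epsilon]}(x)$. A compact invariant set $K$ is dynamically isolated if there is a neighborhood $U$ of $K$ with $K=\bigcap_{t\in\mathbb{R}}\phi_t(U)$. *)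

theory Defs
  imports "HOL-Analysis.Analysis"
begin

text \<open>A flow on the metric space given by the type 'a (the whole space X = UNIV).\<close>
definition is_flow :: "(real \<Rightarrow> 'a::metric_space \<Rightarrow> 'a) \<Rightarrow> bool" where
  "is_flow \<phi> \<longleftrightarrow> continuous_on UNIV (\<lambda>(t, x). \<phi> t x) \<and> \<phi> 0 = id \<and>
     (\<forall>t s. \<phi> (t + s) = \<phi> t \<circ> \<phi> s)"

definition Sing :: "(real \<Rightarrow> 'a \<Rightarrow> 'a) \<Rightarrow> 'a set" where
  "Sing \<phi> = {x. \<forall>t. \<phi> t x = x}"

definition expansive_on :: "(real \<Rightarrow> 'a::metric_space \<Rightarrow> 'a) \<Rightarrow> 'a set \<Rightarrow> bool" where
  "expansive_on \<phi> \<Lambda> \<longleftrightarrow>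
     (\<forall>\<epsilon>>0. \<exists>\<delta>>0. \<forall>x\<in>\<Lambda>. \<forall>y\<in>\<Lambda>. \<forall>s :: real \<Rightarrow> real.
        continuous_on UNIV s \<and> s 0 = 0 \<and> (\<forall>t. dist (\<phi> t x) (\<phi> (s t) y) \<le> \<delta>)
        \<longrightarrow> y \<in> (\<lambda>t. \<phi> t x) ` {-\<epsilon>..\<epsilon>})"

definition invariant_set :: "(real \<Rightarrow> 'a \<Rightarrow> 'a) \<Rightarrow> 'a set \<Rightarrow> bool" where
  "invariant_set \<phi> K \<longleftrightarrow> (\<forall>t. \<phi> t ` K = K)"

definition dynamically_isolated :: "(real \<Rightarrow> 'a::metric_space \<Rightarrow> 'a) \<Rightarrow> 'a set \<Rightarrow> bool" where
  "dynamically_isolated \<phi> K \<longleftrightarrow> compact K \<and> invariant_set \<phi> K \<and>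
     (\<exists>U. K \<subseteq> interior U \<and> K = (\<Inter>t. \<phi> t ` U))"

end

theory Submission
  imports Defs
begin

text \<open>
  Let \<open>\<delta>\<close> be an expansivity constant. A regular point whose whole orbit stays very close to
  \<open>Sing \<phi>\<close> moves little in bounded time, so it is \<open>\<delta>\<close>-shadowed by its own time-3 image;
  expansiveness then makes it periodic with period at most 4, and its orbit stays within
  \<open>\<delta>/4\<close> of it. Two such regular points that are close to each other shadow each other and
  hence lie on one orbit. If regular orbits came arbitrarily close to \<open>Sing \<phi>\<close>, compactness
  would give two such points, one at a positive distance from \<open>Sing \<phi>\<close> and the other with
  its whole orbit nearer to \<open>Sing \<phi>\<close> than that distance, which is impossible. Hence a small
  uniform neighbourhood of \<open>Sing \<phi>\<close> contains no full regular orbit, i.e. it isolates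
  \<open>Sing \<phi>\<close>.
\<close>

locale flow =
  fixes \<phi> :: "real \<Rightarrow> 'a::metric_space \<Rightarrow> 'a"
  assumes is_flow: "is_flow \<phi>"
begin

lemma continuous_on_flow: "continuous_on UNIV (\<lambda>(t, x). \<phi> t x)"
  using is_flow by (simp add: is_flow_def)

lemma flow_zero [simp]: "\<phi> 0 x = x"
  using is_flow by (simp add: is_flow_def)

lemma flow_add: "\<phi> (t + s) x = \<phi> t (\<phi> s x)"
  using is_flow by (simp add: is_flow_def)

lemma flow_neg_cancel [simp]: "\<phi> (-t) (\<phi> t x) = x"
  by (metis flow_add flow_zero add.commute add.right_inverse)

lemma flow_cancel_neg [simp]: "\<phi> t (\<phi> (-t) x) = x"
  by (metis flow_neg_cancel minus_minus)

lemma flow_commute: "\<phi> t (\<phi> s x) = \<phi> s (\<phi> t x)"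
  by (metis flow_add add.commute)

lemma continuous_on_flow_time: "continuous_on UNIV (\<phi> t)"
proof -
  have "continuous_on UNIV ((\<lambda>(t, x). \<phi> t x) \<circ> (\<lambda>x. (t, x)))"
    by (rule continuous_on_compose)
      (auto intro!: continuous_intros continuous_on_flow[THEN continuous_on_subset])
  thus ?thesis by (simp add: o_def)
qed

lemma closed_Sing: "closed (Sing \<phi>)"
proof -
  have "Sing \<phi> = (\<Inter>t. {x. \<phi> t x = id x})" by (auto simp: Sing_def)
  moreover have "closed {x. \<phi> t x = id x}" for t
    by (rule closed_Collect_eq) (auto intro: continuous_on_flow_time continuous_on_id)
  ultimately show ?thesis by auto
qed

lemma invariant_set_Sing: "invariant_set \<phi> (Sing \<phi>)"
proof -
  have "\<phi> t ` Sing \<phi> = id ` Sing \<phi>" for t by (intro image_cong) (auto simp: Sing_def)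
  thus ?thesis by (simp add: invariant_set_def)
qed

lemma flow_in_Sing_iff [simp]: "\<phi> c y \<in> Sing \<phi> \<longleftrightarrow> y \<in> Sing \<phi>"
proof
  assume "\<phi> c y \<in> Sing \<phi>"
  hence "\<phi> t (\<phi> c y) = \<phi> c y" for t by (simp add: Sing_def)
  hence "\<phi> t y = y" for t by (metis flow_commute flow_neg_cancel)
  thus "y \<in> Sing \<phi>" by (simp add: Sing_def)
qed (simp add: Sing_def)

lemma Inter_flow_image: "(\<Inter>t. \<phi> t ` U) = {y. \<forall>t. \<phi> t y \<in> U}"
proof (intro equalityI subsetI CollectI allI)
  fix y t assume "y \<in> (\<Inter>t. \<phi> t ` U)"
  then obtain u where "u \<in> U" "y = \<phi> (-t) u" by blast
  then show "\<phi> t y \<in> U" by simp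
next
  fix y assume "y \<in> {y. \<forall>t. \<phi> t y \<in> U}"
  then have "y \<in> \<phi> t ` U" for t by (intro rev_image_eqI[of "\<phi> (-t) y"]) auto
  then show "y \<in> (\<Inter>t. \<phi> t ` U)" by blast
qed

lemma flow_periodic_int:
  assumes "\<phi> P y = y"
  shows "\<phi> (P * of_int k) y = y"
proof -
  have nat: "\<phi> (P * real n) y = y" for n
  proof (induction n)
    case (Suc n)
    have "\<phi> (P * real (Suc n)) y = \<phi> P (\<phi> (P * real n) y)"
      by (simp add: flow_add[symmetric] algebra_simps)
    with Suc assms show ?case by simp
  qed simp
  show ?thesis
  proof (cases k rule: int_cases)
    case (neg n)
    have "\<phi> (-(P * real (Suc n))) y = y" by (metis nat flow_neg_cancel)
    moreover have "of_int k = - real (Suc n)" using neg by simp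
    ultimately show ?thesis by (metis mult_minus_right)
  qed (use nat in simp)
qed

lemma flow_periodic_orbit:
  assumes "\<phi> P y = y" "P > 0"
  obtains c where "c \<in> {0..P}" "\<phi> t y = \<phi> c y"
proof -
  define k where "k = \<lfloor>t / P\<rfloor>"
  have "of_int k \<le> t / P" "t / P < of_int k + 1" unfolding k_def by linarith+
  hence "P * of_int k \<le> t" "t < P * of_int k + P"
    using assms(2) by (simp_all add: field_simps)
  moreover have "\<phi> t y = \<phi> (t - P * of_int k) (\<phi> (P * of_int k) y)"
    by (simp add: flow_add[symmetric])
  ultimately show ?thesis
    using that[of "t - P * of_int k"] flow_periodic_int[OF assms(1)] by auto
qed

definition near_Sing :: "real \<Rightarrow> 'a \<Rightarrow> bool" where
  "near_Sing e z \<longleftrightarrow> (\<exists>p\<in>Sing \<phi>. dist z p < e)"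

lemma near_Sing_mono: "near_Sing e z \<Longrightarrow> e \<le> e' \<Longrightarrow> near_Sing e' z"
  unfolding near_Sing_def by force

lemma near_fixed_point_moves_little:
  assumes "compact (UNIV :: 'a set)" "\<rho> > 0"
  obtains \<eta> where "\<eta> > 0" "\<And>z c. near_Sing \<eta> z \<Longrightarrow> c \<in> {0..T} \<Longrightarrow> dist (\<phi> c z) z < \<rho>"
proof -
  let ?S = "{0..T} \<times> (UNIV :: 'a set)"
  have "uniformly_continuous_on ?S (\<lambda>(t, x). \<phi> t x)"
    using assms(1) continuous_on_flow
    by (intro compact_uniformly_continuous compact_Times) (auto intro: continuous_on_subset)
  moreover have "\<rho>/2 > 0" using assms(2) by simp
  ultimately obtain d where d: "d > 0" "\<forall>x\<in>?S. \<forall>x'\<in>?S. dist x' x < d \<longrightarrow>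
      dist ((\<lambda>(t, x). \<phi> t x) x') ((\<lambda>(t, x). \<phi> t x) x) < \<rho>/2"
    unfolding uniformly_continuous_on_def by blast
  show ?thesis
  proof (rule that[of "min d (\<rho>/2)"])
    fix z c assume "near_Sing (min d (\<rho>/2)) z" and c: "c \<in> {0..T}"
    then obtain p where p: "p \<in> Sing \<phi>" and z: "dist z p < min d (\<rho>/2)"
      unfolding near_Sing_def by blast
    have "dist (c, z) (c, p) < d" using z by (simp add: dist_Pair_Pair)
    hence "dist (\<phi> c z) (\<phi> c p) < \<rho>/2" using d(2) c by force
    moreover have "\<phi> c p = p" using p by (simp add: Sing_def)
    ultimately show "dist (\<phi> c z) z < \<rho>"
      using z dist_triangle2[of "\<phi> c z" z p] by simp
  qed (use assms(2) d(1) in simp)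
qed

text \<open>The reparametrization in \<^const>\<open>expansive_on\<close> is only ever taken to be the identity.\<close>

definition expansivity_constant :: "real \<Rightarrow> bool" where
  "expansivity_constant \<delta> \<longleftrightarrow> (\<forall>x y. x \<notin> Sing \<phi> \<longrightarrow> y \<notin> Sing \<phi> \<longrightarrow>
     (\<forall>t. dist (\<phi> t x) (\<phi> t y) \<le> \<delta>) \<longrightarrow> (\<exists>u\<in>{-1..1}. y = \<phi> u x))"

lemma expansivity_constantD:
  assumes "expansivity_constant \<delta>" "x \<notin> Sing \<phi>" "y \<notin> Sing \<phi>"
    "\<And>t. dist (\<phi> t x) (\<phi> t y) \<le> \<delta>"
  shows "\<exists>u\<in>{-1..1}. y = \<phi> u x"
  using assms unfolding expansivity_constant_def by blast

lemma expansive_on_imp_expansivity_constant: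
  assumes "expansive_on \<phi> (UNIV - Sing \<phi>)"
  obtains \<delta> where "\<delta> > 0" "expansivity_constant \<delta>"
proof -
  obtain \<delta> where \<delta>: "\<delta> > 0" "\<forall>x\<in>UNIV - Sing \<phi>. \<forall>y\<in>UNIV - Sing \<phi>. \<forall>s :: real \<Rightarrow> real.
      continuous_on UNIV s \<and> s 0 = 0 \<and> (\<forall>t. dist (\<phi> t x) (\<phi> (s t) y) \<le> \<delta>)
      \<longrightarrow> y \<in> (\<lambda>t. \<phi> t x) ` {-1..1}"
    using assms[unfolded expansive_on_def, rule_format, OF zero_less_one] by blast
  have "expansivity_constant \<delta>"
    unfolding expansivity_constant_def
  proof (intro allI impI)
    fix x y assume "x \<notin> Sing \<phi>" "y \<notin> Sing \<phi>" "\<forall>t. dist (\<phi> t x) (\<phi> t y) \<le> \<delta>"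
    with \<delta>(2)[rule_format, of x y "\<lambda>t. t"] show "\<exists>u\<in>{-1..1}. y = \<phi> u x"
      by (auto simp: continuous_on_id')
  qed
  with \<delta>(1) show ?thesis using that by blast
qed

text \<open>The displacement bound over times in \<open>[0,4]\<close> makes \<open>y\<close> \<open>\<delta>\<close>-shadow \<open>\<phi> 3 y\<close>, so
  \<open>\<phi> 3 y = \<phi> u y\<close> with \<open>|u| \<le> 1\<close>, and \<open>y\<close> is periodic with period \<open>3 - u \<in> [2,4]\<close>.\<close>

lemma orbit_near_Sing_stays_near:
  assumes \<delta>: "\<delta> > 0" "expansivity_constant \<delta>"
    and \<eta>: "\<And>z c. near_Sing \<eta> z \<Longrightarrow> c \<in> {0..4} \<Longrightarrow> dist (\<phi> c z) z < \<delta>/4"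
    and y: "y \<notin> Sing \<phi>" "\<And>t. near_Sing \<eta> (\<phi> t y)"
  shows "dist (\<phi> t y) y < \<delta>/4"
proof -
  have moves_little: "dist (\<phi> c (\<phi> s y)) (\<phi> s y) < \<delta>/4" if "c \<in> {0..4}" for c s
    using \<eta> y(2) that by blast
  have "dist (\<phi> s y) (\<phi> s (\<phi> 3 y)) \<le> \<delta>" for s
    using moves_little[of 3 s] \<delta>(1) by (simp add: flow_commute dist_commute)
  moreover have "\<phi> 3 y \<notin> Sing \<phi>" using y(1) by simp
  ultimately obtain u where u: "u \<in> {-1..1}" "\<phi> 3 y = \<phi> u y"
    using expansivity_constantD[OF \<delta>(2) y(1)] by blast
  have "\<phi> (3 - u) y = \<phi> (-u) (\<phi> 3 y)" by (simp add: flow_add[symmetric])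
  hence "\<phi> (3 - u) y = y" using u(2) by simp
  moreover have "3 - u > 0" using u(1) by simp
  ultimately obtain c where "c \<in> {0..3 - u}" "\<phi> t y = \<phi> c y"
    by (rule flow_periodic_orbit)
  with u(1) moves_little[of c 0] show ?thesis by simp
qed

lemma close_orbits_near_Sing_coincide:
  assumes \<delta>: "\<delta> > 0" "expansivity_constant \<delta>"
    and \<eta>: "\<And>z c. near_Sing \<eta> z \<Longrightarrow> c \<in> {0..4} \<Longrightarrow> dist (\<phi> c z) z < \<delta>/4"
    and y: "y \<notin> Sing \<phi>" "\<And>t. near_Sing \<eta> (\<phi> t y)"
    and y': "y' \<notin> Sing \<phi>" "\<And>t. near_Sing \<eta> (\<phi> t y')"
    and "dist y' y < \<delta>/2"
  obtains u where "y = \<phi> u y'"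
proof -
  have "dist (\<phi> t y') (\<phi> t y) \<le> \<delta>" for t
  proof -
    have "dist (\<phi> t y') (\<phi> t y) \<le> dist (\<phi> t y') y' + dist y' y + dist y (\<phi> t y)"
      using dist_triangle[of "\<phi> t y'" "\<phi> t y" y'] dist_triangle[of y' "\<phi> t y" y] by linarith
    moreover have "dist (\<phi> t y') y' < \<delta>/4" "dist y (\<phi> t y) < \<delta>/4"
      using orbit_near_Sing_stays_near[OF \<delta> \<eta>] y y' by (auto simp: dist_commute)
    ultimately show ?thesis using \<open>dist y' y < \<delta>/2\<close> by linarith
  qed
  with expansivity_constantD[OF \<delta>(2) y'(1) y(1)] that show ?thesis by blast
qed

lemma regular_orbits_not_arbitrarily_near_Sing:
  assumes "compact (UNIV :: 'a set)"
    and \<delta>: "\<delta> > 0" "expansivity_constant \<delta>"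
    and \<eta>: "\<eta> > 0" "\<And>z c. near_Sing \<eta> z \<Longrightarrow> c \<in> {0..4} \<Longrightarrow> dist (\<phi> c z) z < \<delta>/4"
    and Y: "\<And>n t. near_Sing (\<eta> / Suc n) (\<phi> t (Y n))" "\<And>n. Y n \<notin> Sing \<phi>"
  shows False
proof -
  have "\<eta> / Suc n \<le> \<eta>" for n using \<eta>(1) by (simp add: divide_le_eq)
  then have Y_near: "near_Sing \<eta> (\<phi> t (Y n))" for n t by (rule near_Sing_mono[OF Y(1)])
  obtain r p where r: "strict_mono r" "(Y \<circ> r) \<longlonglongrightarrow> p"
    using assms(1) compact_imp_seq_compact unfolding seq_compact_def by blast
  then have "Cauchy (Y \<circ> r)" by (intro LIMSEQ_imp_Cauchy) simp
  moreover have "\<delta>/2 > 0" using \<delta>(1) by simp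
  ultimately obtain N where "\<forall>m\<ge>N. \<forall>n\<ge>N. dist ((Y \<circ> r) m) ((Y \<circ> r) n) < \<delta>/2"
    unfolding Cauchy_def by blast
  then have N: "\<And>m n. m \<ge> N \<Longrightarrow> n \<ge> N \<Longrightarrow> dist (Y (r m)) (Y (r n)) < \<delta>/2" by simp
  define y where "y = Y (r N)"
  have "open (- Sing \<phi>)" "y \<in> - Sing \<phi>"
    using closed_Sing Y(2) by (auto simp: y_def)
  then obtain \<epsilon> where "\<epsilon> > 0" "ball y \<epsilon> \<subseteq> - Sing \<phi>" by (meson openE)
  then have \<epsilon>: "\<epsilon> > 0" "\<not> near_Sing \<epsilon> y" unfolding near_Sing_def by auto
  obtain K where "inverse (real (Suc K)) < \<epsilon> / \<eta>"
    using reals_Archimedean[of "\<epsilon> / \<eta>"] \<epsilon>(1) \<eta>(1) by auto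
  then have K: "\<eta> / Suc K < \<epsilon>" using \<eta>(1) by (simp add: field_simps)
  define M where "M = max N K"
  have "dist (Y (r M)) y < \<delta>/2" using N[of M N] by (simp add: y_def M_def)
  then obtain u where u: "y = \<phi> u (Y (r M))"
    using close_orbits_near_Sing_coincide[OF \<delta> \<eta>(2) Y(2) Y_near Y(2) Y_near]
    unfolding y_def by blast
  have "K \<le> r M" using seq_suble[OF r(1), of M] by (simp add: M_def)
  then have "\<eta> / Suc (r M) \<le> \<eta> / Suc K" using \<eta>(1) by (simp add: frac_le)
  with K have "\<eta> / Suc (r M) \<le> \<epsilon>" by linarith
  moreover have "near_Sing (\<eta> / Suc (r M)) y" using Y(1) u by simp
  ultimately have "near_Sing \<epsilon> y" by (rule near_Sing_mono[rotated])
  with \<epsilon>(2) show False by contradiction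
qed

theorem no_regular_orbit_near_Sing:
  assumes "compact (UNIV :: 'a set)" "expansive_on \<phi> (UNIV - Sing \<phi>)"
  obtains \<eta> where "\<eta> > 0" "\<And>y. (\<And>t. near_Sing \<eta> (\<phi> t y)) \<Longrightarrow> y \<in> Sing \<phi>"
proof -
  obtain \<delta> where \<delta>: "\<delta> > 0" "expansivity_constant \<delta>"
    using expansive_on_imp_expansivity_constant[OF assms(2)] .
  then have "\<delta>/4 > 0" by simp
  then obtain \<eta> where \<eta>: "\<eta> > 0" "\<And>z c. near_Sing \<eta> z \<Longrightarrow> c \<in> {0..4} \<Longrightarrow> dist (\<phi> c z) z < \<delta>/4"
    using near_fixed_point_moves_little[OF assms(1)] by blast
  have "\<exists>n. \<forall>y. (\<forall>t. near_Sing (\<eta> / Suc n) (\<phi> t y)) \<longrightarrow> y \<in> Sing \<phi>"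
  proof (rule ccontr)
    assume "\<nexists>n. \<forall>y. (\<forall>t. near_Sing (\<eta> / Suc n) (\<phi> t y)) \<longrightarrow> y \<in> Sing \<phi>"
    then have "\<exists>y. (\<forall>t. near_Sing (\<eta> / Suc n) (\<phi> t y)) \<and> y \<notin> Sing \<phi>" for n by blast
    then obtain Y where "\<And>n t. near_Sing (\<eta> / Suc n) (\<phi> t (Y n))" "\<And>n. Y n \<notin> Sing \<phi>"
      by metis
    with regular_orbits_not_arbitrarily_near_Sing[OF assms(1) \<delta> \<eta>] show False by blast
  qed
  then obtain n where "\<And>y. (\<And>t. near_Sing (\<eta> / Suc n) (\<phi> t y)) \<Longrightarrow> y \<in> Sing \<phi>" by blast
  with that[of "\<eta> / Suc n"] \<eta>(1) show ?thesis by simp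
qed

end

theorem mainTheorem13:
  fixes \<phi> :: "real \<Rightarrow> 'a::metric_space \<Rightarrow> 'a"
  assumes "compact (UNIV :: 'a set)"
    and "is_flow \<phi>"
    and "expansive_on \<phi> (UNIV - Sing \<phi>)"
  shows "dynamically_isolated \<phi> (Sing \<phi>)"
proof -
  interpret flow \<phi> by (rule flow.intro[OF assms(2)])
  obtain \<eta> where \<eta>: "\<eta> > 0" "\<And>y. (\<And>t. near_Sing \<eta> (\<phi> t y)) \<Longrightarrow> y \<in> Sing \<phi>"
    using no_regular_orbit_near_Sing[OF assms(1,3)] by blast
  define U where "U = {z. near_Sing \<eta> z}"
  have "U = (\<Union>p\<in>Sing \<phi>. ball p \<eta>)"
    unfolding U_def near_Sing_def by (auto simp: dist_commute)
  then have "open U" by (simp add: open_UN)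
  have "near_Sing \<eta> p" if "p \<in> Sing \<phi>" for p
    unfolding near_Sing_def using that \<eta>(1) by (intro bexI[of _ p]) auto
  then have "Sing \<phi> \<subseteq> U" by (auto simp: U_def)
  moreover have "{y. \<forall>t. \<phi> t y \<in> U} \<subseteq> Sing \<phi>"
    using \<eta>(2) by (auto simp: U_def)
  moreover have "Sing \<phi> \<subseteq> {y. \<forall>t. \<phi> t y \<in> U}"
    using \<open>Sing \<phi> \<subseteq> U\<close> by (auto simp: Sing_def)
  ultimately have "Sing \<phi> \<subseteq> interior U" "Sing \<phi> = (\<Inter>t. \<phi> t ` U)"
    using \<open>open U\<close> by (auto simp: interior_open Inter_flow_image)
  then show ?thesis
    unfolding dynamically_isolated_def
    using compact_Int_closed[OF assms(1) closed_Sing] invariant_set_Sing by auto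
qed

end
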